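(* Let $R,R'$ be parallelograms in $\mathbb{R}^2$ each having a pair of vertical edges, such that $I(R)=I(R')$, $U(R)\cap U(R')\neq\emptyset$, $R\cap R'\neq\emptyset$, and $H(R)\le H(R')$. Then $R\subseteq 7R'$. Moreover, if $7H(R)\le H(R')$, then $7R\subseteq 7R'$.
   Context: For a parallelogram $R$ with two vertical edges: the height $H(R)$ is the common length of the vertical edges; the shadow $I(R)$ is the projection of $R$ onto the $x$-axis; the central line segment is the segment joining the midpoints of the vertical edges; $U(R)$ is the set of slopes of (non-vertical) lines intersecting both vertical edges of $R$. For $C>0$, $CR$ denotes the parallelogram with the same central line segment as $R$ and height $C\,H(R)$. *)

theory Defs
  imports Complex_Main
begin

text \<open>A parallelogram in the plane with two vertical edges is described by its
shadow endpoints (left < right), the line y = slope * x + icpt carrying its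
central line segment, and its height (length of the vertical edges, > 0).\<close>

record vpar =
  left :: real
  right :: real
  slope :: real
  icpt :: real
  height :: real

definition valid_par :: "vpar \<Rightarrow> bool" where
  "valid_par P \<longleftrightarrow> left P < right P \<and> 0 < height P"

definition par_set :: "vpar \<Rightarrow> (real \<times> real) set" where
  "par_set P = {z. left P \<le> fst z \<and> fst z \<le> right P \<and>
                   \<bar>snd z - (slope P * fst z + icpt P)\<bar> \<le> height P / 2}"

definition H :: "vpar \<Rightarrow> real" where
  "H P = height P"

definition shadow :: "vpar \<Rightarrow> real set" where
  "shadow P = fst ` par_set P"

definition left_edge :: "vpar \<Rightarrow> (real \<times> real) set" where
  "left_edge P = {(left P, y) | y. \<bar>y - (slope P * left P + icpt P)\<bar> \<le> height P / 2}"

definition right_edge :: "vpar \<Rightarrow> (real \<times> real) set" where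
  "right_edge P = {(right P, y) | y. \<bar>y - (slope P * right P + icpt P)\<bar> \<le> height P / 2}"

definition U :: "vpar \<Rightarrow> real set" where
  "U P = {s. \<exists>t. (\<exists>z\<in>left_edge P. snd z = s * fst z + t) \<and>
                  (\<exists>z\<in>right_edge P. snd z = s * fst z + t)}"

definition scale :: "real \<Rightarrow> vpar \<Rightarrow> vpar" where
  "scale C P = P\<lparr>height := C * height P\<rparr>"

end

theory Submission
  imports Defs
begin

text \<open>The two central lines differ by an affine function of x. Its slope is controlled because
  a common slope in U R \<inter> U R' deviates from each central slope by at most height over width,
  and its value at one point is controlled by a common point of R and R'. Hence on the common
  shadow the central lines stay within 3(H R + H R')/2 \<le> 3 H R' of each other, which leaves
  room for R, and for 7R when 7 H R \<le> H R', inside 7R'.\<close>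

definition centre_line :: "vpar \<Rightarrow> real \<Rightarrow> real" where
  "centre_line P x = slope P * x + icpt P"

lemma shadow_eq_Icc: "valid_par P \<Longrightarrow> shadow P = {left P..right P}"
  unfolding shadow_def par_set_def valid_par_def
proof (auto simp: image_iff)
  fix x assume "0 < height P"
  then show "\<exists>y. \<bar>y - (slope P * x + icpt P)\<bar> * 2 \<le> height P"
    by (intro exI[of _ "slope P * x + icpt P"]) simp
qed

lemma shadow_eq_imp_same_edges:
  assumes "valid_par P" "valid_par Q" "shadow P = shadow Q"
  shows "left P = left Q" "right P = right Q"
proof -
  have "{left P..right P} = {left Q..right Q}"
    using assms shadow_eq_Icc by metis
  then show "left P = left Q" "right P = right Q"
    using assms(1,2) unfolding valid_par_def by (simp_all add: Icc_eq_Icc)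
qed

lemma U_slope_deviation:
  assumes "s \<in> U P"
  shows "\<bar>(slope P - s) * (right P - left P)\<bar> \<le> height P"
proof -
  from assms obtain t y1 y2 where
    y1: "\<bar>y1 - centre_line P (left P)\<bar> \<le> height P / 2" "y1 = s * left P + t" and
    y2: "\<bar>y2 - centre_line P (right P)\<bar> \<le> height P / 2" "y2 = s * right P + t"
    unfolding U_def left_edge_def right_edge_def centre_line_def by auto
  have "(slope P - s) * (right P - left P) =
        (centre_line P (right P) - y2) - (centre_line P (left P) - y1)"
    using y1 y2 by (simp add: centre_line_def algebra_simps)
  then show ?thesis using y1 y2 unfolding abs_le_iff by linarith
qed

lemma common_U_slope_difference:
  assumes "s \<in> U P" "s \<in> U Q" "left P = left Q" "right P = right Q"
  shows "\<bar>(slope P - slope Q) * (right P - left P)\<bar> \<le> height P + height Q"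
proof -
  have "(slope P - slope Q) * (right P - left P) =
        (slope P - s) * (right P - left P) - (slope Q - s) * (right Q - left Q)"
    using assms(3,4) by (simp add: algebra_simps)
  then show ?thesis
    using U_slope_deviation[OF assms(1)] U_slope_deviation[OF assms(2)] by (simp add: abs_le_iff)
qed

lemma par_set_centre_line_distance:
  assumes "z \<in> par_set P" "z \<in> par_set Q"
  shows "\<bar>centre_line P (fst z) - centre_line Q (fst z)\<bar> \<le> (height P + height Q) / 2"
proof -
  have "\<bar>snd z - centre_line P (fst z)\<bar> \<le> height P / 2"
       "\<bar>snd z - centre_line Q (fst z)\<bar> \<le> height Q / 2"
    using assms unfolding par_set_def centre_line_def by auto
  then show ?thesis unfolding abs_le_iff by auto
qed

lemma affine_bound_on_interval:
  fixes p q :: real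
  assumes "x \<in> {a..b}" "x0 \<in> {a..b}"
    and "\<bar>p * (b - a)\<bar> \<le> M" and "\<bar>p * x0 + q\<bar> \<le> N"
  shows "\<bar>p * x + q\<bar> \<le> M + N"
proof -
  have "\<bar>p * (x - x0)\<bar> = \<bar>p\<bar> * \<bar>x - x0\<bar>" by (simp add: abs_mult)
  also have "\<dots> \<le> \<bar>p\<bar> * (b - a)" using assms(1,2) by (intro mult_left_mono) auto
  also have "\<dots> = \<bar>p * (b - a)\<bar>" using assms(1) by (simp add: abs_mult)
  finally have "\<bar>p * (x - x0)\<bar> \<le> M" using assms(3) by linarith
  moreover have "p * x + q = p * (x - x0) + (p * x0 + q)" by (simp add: algebra_simps)
  ultimately show ?thesis using assms(4) abs_triangle_ineq[of "p * (x - x0)" "p * x0 + q"]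
    by linarith
qed

lemma par_set_scale_subset:
  assumes "left P = left Q" "right P = right Q"
    and "\<And>x. x \<in> {left P..right P} \<Longrightarrow>
           \<bar>centre_line P x - centre_line Q x\<bar> + C * height P / 2 \<le> C' * height Q / 2"
  shows "par_set (scale C P) \<subseteq> par_set (scale C' Q)"
proof
  fix w assume "w \<in> par_set (scale C P)"
  then have wx: "fst w \<in> {left P..right P}"
    and wy: "\<bar>snd w - centre_line P (fst w)\<bar> \<le> C * height P / 2"
    unfolding par_set_def scale_def centre_line_def by auto
  have "\<bar>snd w - centre_line Q (fst w)\<bar> \<le> C' * height Q / 2"
    using assms(3)[OF wx] wy
      abs_triangle_ineq[of "snd w - centre_line P (fst w)" "centre_line P (fst w) - centre_line Q (fst w)"]
    by simp
  then show "w \<in> par_set (scale C' Q)"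
    using wx assms(1,2) unfolding par_set_def scale_def centre_line_def by simp
qed

lemma centre_line_gap:
  assumes "left P = left Q" "right P = right Q"
    and "s \<in> U P" "s \<in> U Q" and "z \<in> par_set P" "z \<in> par_set Q"
    and "x \<in> {left P..right P}"
  shows "\<bar>centre_line P x - centre_line Q x\<bar> \<le> 3 * (height P + height Q) / 2"
proof -
  have difference: "centre_line P y - centre_line Q y = (slope P - slope Q) * y + (icpt P - icpt Q)"
    for y unfolding centre_line_def by (simp add: algebra_simps)
  have "fst z \<in> {left P..right P}" using assms(5) unfolding par_set_def by auto
  moreover have "\<bar>(slope P - slope Q) * fst z + (icpt P - icpt Q)\<bar> \<le> (height P + height Q) / 2"
    using par_set_centre_line_distance[OF assms(5,6)] unfolding difference .
  ultimately have "\<bar>(slope P - slope Q) * x + (icpt P - icpt Q)\<bar> \<le> (height P + height Q) + (height P + height Q) / 2"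
    by (rule affine_bound_on_interval[OF assms(7) _ common_U_slope_difference[OF assms(3,4,1,2)]])
  then show ?thesis unfolding difference by argo
qed

theorem lemma3p1:
  assumes "valid_par R" and "valid_par R'"
    and "shadow R = shadow R'"
    and "U R \<inter> U R' \<noteq> {}"
    and "par_set R \<inter> par_set R' \<noteq> {}"
    and "H R \<le> H R'"
  shows "par_set R \<subseteq> par_set (scale 7 R') \<and>
         (7 * H R \<le> H R' \<longrightarrow> par_set (scale 7 R) \<subseteq> par_set (scale 7 R'))"
proof -
  note edges = shadow_eq_imp_same_edges[OF assms(1-3)]
  obtain s where s: "s \<in> U R" "s \<in> U R'" using assms(4) by blast
  obtain z where z: "z \<in> par_set R" "z \<in> par_set R'" using assms(5) by blast
  note gap = centre_line_gap[OF edges s z]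
  \<comment> \<open>C H R / 2 + 3 (H R + H R') / 2 \<le> 7 H R' / 2 rearranged\<close>
  have fits: "par_set (scale C R) \<subseteq> par_set (scale 7 R')"
    if "(C + 3) * height R \<le> 4 * height R'" for C
  proof (rule par_set_scale_subset[OF edges])
    fix x assume "x \<in> {left R..right R}"
    with gap[of x] that show "\<bar>centre_line R x - centre_line R' x\<bar> + C * height R / 2 \<le> 7 * height R' / 2"
      by (simp add: distrib_right)
  qed
  have "par_set R \<subseteq> par_set (scale 7 R')"
    using fits[of 1] assms(6) by (simp add: scale_def H_def)
  moreover have "par_set (scale 7 R) \<subseteq> par_set (scale 7 R')" if "7 * H R \<le> H R'"
    using fits[of 7] that assms(1) by (simp add: H_def valid_par_def)
  ultimately show ?thesis by blast
qed

end
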